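(* If $n$ is a positive integer that is non-composite ($n=1$ or $n$ prime), then \[ Z(2n-1)\equiv 0\pmod{n}, \] where $Z(m)=\sum_{k=0}^{m-1}\frac{1+(-1)^{k}k!(m-k-1)!}{m}$. *)

theory Defs
  imports Complex_Main "HOL-Computational_Algebra.Primes"
begin

definition Z :: "nat \<Rightarrow> rat" where
  "Z m = (\<Sum>k<m. (1 + (-1) ^ k * fact k * fact (m - k - 1)) / of_nat m)"

end

theory Submission
  imports Defs "HOL-Number_Theory.Number_Theory"
begin

(* Multiplying the alternating sum of k! (m-k-1)! by m+1 makes it telescope, which gives
   Z(2n-1) = 1 + (2n-2)!/n.  For a prime p, (2p-2)!/p = (p-1)! (p+1)(p+2)...(2p-2), and the
   rising product is congruent to (p-2)! modulo p.  By Wilson, (p-1)! = -1 and hence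
   (p-2)! = 1 modulo p, so (2p-2)!/p = -1 and Z(2p-1) = 0 modulo p. *)

lemma sum_alternating_telescope:
  fixes b :: "nat \<Rightarrow> 'a::comm_ring_1"
  shows "(\<Sum>k<n. (-1)^k * (b k + b (Suc k))) = b 0 - (-1)^n * b n"
  by (induction n) (auto simp: algebra_simps)

lemma alternating_fact_sum:
  "of_nat (N + 2) * (\<Sum>k<Suc N. (-1)^k * fact k * fact (N - k))
     = (1 + (-1)^N) * (fact (N + 1) :: 'a::{comm_ring_1,ring_char_0})"
proof -
  define b :: "nat \<Rightarrow> 'a" where "b k = fact k * fact (N + 1 - k)" for k
  have adjacent_sum: "b k + b (Suc k) = of_nat (N + 2) * (fact k * fact (N - k))" if "k \<le> N" for k
  proof -
    have "fact (N + 1 - k) = (of_nat (N + 1 - k) :: 'a) * fact (N - k)"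
      using that by (simp add: Suc_diff_le)
    then have "b k + b (Suc k) = fact k * fact (N - k) * (of_nat (N + 1 - k) + of_nat (Suc k))"
      by (simp add: b_def algebra_simps)
    also have "of_nat (N + 1 - k) + of_nat (Suc k) = (of_nat (N + 2) :: 'a)"
      using that by (simp flip: of_nat_add)
    finally show ?thesis
      by (simp add: algebra_simps)
  qed
  have "of_nat (N + 2) * (\<Sum>k<Suc N. (-1)^k * fact k * fact (N - k))
      = (\<Sum>k<Suc N. (-1)^k * (b k + b (Suc k)))"
    unfolding sum_distrib_left by (intro sum.cong refl) (simp add: adjacent_sum algebra_simps)
  also have "\<dots> = b 0 - (-1)^Suc N * b (Suc N)"
    by (rule sum_alternating_telescope)
  also have "\<dots> = (1 + (-1)^N) * fact (N + 1)"
    by (simp add: b_def algebra_simps)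
  finally show ?thesis .
qed

lemma Z_Suc: "Z (Suc N) = 1 + (1 + (-1)^N) * fact N / of_nat (N + 2)"
proof -
  define S :: rat where "S = (\<Sum>k<Suc N. (-1)^k * fact k * fact (N - k))"
  have "Z (Suc N) = 1 + S / of_nat (Suc N)"
    by (simp add: Z_def S_def add_divide_distrib sum.distrib sum_divide_distrib[symmetric])
  moreover have "S = (1 + (-1)^N) * fact (N + 1) / of_nat (N + 2)"
    using alternating_fact_sum[of N, where 'a = rat]
    by (simp add: S_def field_simps del: of_nat_add)
  ultimately show ?thesis
    by simp
qed

lemma Z_odd:
  assumes "n > 0"
  shows "Z (2 * n - 1) = 1 + fact (2 * n - 2) / of_nat n"
proof -
  have "2 * n - 1 = Suc (2 * n - 2)" and "2 * n - 2 + 2 = 2 * n"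
    using assms by simp_all
  then show ?thesis
    by (simp add: Z_Suc)
qed

lemma pochhammer_shift_cong: "[pochhammer (a + int m) k = pochhammer a k] (mod int m)"
  unfolding pochhammer_prod by (intro cong_prod) (simp add: cong_iff_dvd_diff)

lemma fact_pred_pred_cong:
  assumes "prime p"
  shows "[fact (p - 2) = 1] (mod int p)"
proof -
  obtain q where q: "p = Suc (Suc q)"
    using assms prime_ge_2_nat by (metis add_2_eq_Suc le_Suc_ex)
  have "- fact (p - 2) - fact (p - 1) = int p * - (fact (p - 2) :: int)"
    by (simp add: q algebra_simps)
  then have "[- fact (p - 2) = fact (p - 1)] (mod int p)"
    unfolding cong_iff_dvd_diff by simp
  also have "[fact (p - 1) = - 1] (mod int p)"
    using assms by (rule wilson_theorem)
  finally show ?thesis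
    by (simp add: cong_minus_minus_iff)
qed

lemma fact_double_pred_div_cong:
  assumes "prime p"
  shows "[fact (2 * p - 2) div int p = - 1] (mod int p)"
proof -
  have p: "p \<ge> 2"
    using assms prime_ge_2_nat by blast
  define Q :: int where "Q = pochhammer (1 + int p) (p - 2)"
  have "fact (2 * p - 2) = (fact p :: int) * Q"
    using pochhammer_product'[of "1 :: int" p "p - 2"] p
    by (simp add: Q_def pochhammer_fact[symmetric] mult_2)
  also have "fact p = int p * fact (p - 1)"
    using p by (intro fact_reduce) simp
  finally have quotient: "fact (2 * p - 2) div int p = fact (p - 1) * Q"
    using p by simp
  have "[Q = fact (p - 2)] (mod int p)"
    using pochhammer_shift_cong[of 1 p "p - 2"] by (simp add: Q_def pochhammer_fact add.commute)
  also have "[fact (p - 2) = 1] (mod int p)"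
    using assms by (rule fact_pred_pred_cong)
  finally have "[fact (p - 1) * Q = (- 1) * 1] (mod int p)"
    by (rule cong_mult[OF wilson_theorem[OF assms]])
  then show ?thesis
    unfolding quotient by simp
qed

theorem mainTheorem10:
  fixes n :: nat
  assumes "n > 0" and "n = 1 \<or> prime n"
  shows "\<exists>z::int. Z (2 * n - 1) = of_int z \<and> int n dvd z"
proof -
  define z :: int where "z = 1 + fact (2 * n - 2) div int n"
  have "n dvd fact (2 * n - 2)"
    using assms(2) prime_ge_2_nat[of n] by (auto intro: dvd_fact)
  then have "int n dvd fact (2 * n - 2)"
    by (metis int_dvd_int_iff of_nat_fact)
  then have "fact (2 * n - 2) / of_nat n = (of_int (fact (2 * n - 2) div int n) :: rat)"
    by (simp add: of_int_div)
  then have "Z (2 * n - 1) = of_int z"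
    unfolding Z_odd[OF assms(1)] z_def by simp
  moreover have "int n dvd z"
  proof (cases "n = 1")
    case False
    with assms(2) have "[fact (2 * n - 2) div int n = - 1] (mod int n)"
      by (simp add: fact_double_pred_div_cong)
    then show ?thesis
      by (simp add: z_def cong_iff_dvd_diff add.commute)
  qed (simp add: z_def)
  ultimately show ?thesis
    by blast
qed

end
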